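(* Let $u$ be a one-sided Sturmian sequence, with $(X_u^+,\sigma)$ its associated Sturmian system and left special sequence $l=l_1l_2\dots$, $L_n=l_1\dots l_n$. Then for each $n\ge2$ there are exactly two significant blocks of $\tilde X_u$ of length $n$, namely $0L_{n-1}=0l_1\dots l_{n-1}$ and $1L_{n-1}=1l_1\dots l_{n-1}$.
   Context: A sequence $u\in\{0,1\}^{\mathbb N}$ is Sturmian if for every $n\ge1$ exactly $n+1$ distinct blocks of length $n$ occur in $u$. $X_u^+$ is the closure of $\{\sigma^n u:n\in\mathbb N\}$, $\sigma$ the shift $(\sigma x)_i=x_{i+1}$, and $\tilde X_u=\{x\in\{0,1\}^{\mathbb Z}: x_px_{p+1}\dots\in X_u^+\ \forall p\}$ its natural extension; the languages of $u$, $X_u^+$ and $\tilde X_u$ coincide. For each $n$ there is a unique block $L_n$ of length $n$ with $0L_n$ and $1L_n$ both in the language; these are the prefixes of an infinite sequence $l$ (the left special sequence). For a block $a_{-n}\dots a_0$ in the language, $\mathrm{fol}(a_{-n}\dots a_0)=\{b_0b_1\dots\in X_u^+:\exists b\in\tilde X_u,\ b_{-n}\dots b_0=a_{-n}\dots a_0\}$. A block $a_{-n}\dots a_0$ ($n\ge1$) is significant if $\mathrm{fol}(a_{-n}\dots a_0)\subsetneq\mathrm{fol}(a_{-n+1}\dots a_0)$. *)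

theory Defs
  imports "HOL-Analysis.Analysis"
begin

text \<open>One-sided sequences over {0,1} are functions nat => nat (values 0,1);
  two-sided sequences are functions int => nat.
  The space nat => nat carries the product topology (discrete topology on nat).\<close>

definition blocks :: "(nat \<Rightarrow> nat) \<Rightarrow> nat \<Rightarrow> nat list set" where
  "blocks u n = {map (\<lambda>j. u (i + j)) [0..<n] | i. True}"

definition lang :: "(nat \<Rightarrow> nat) \<Rightarrow> nat list set" where
  "lang u = (\<Union>n. blocks u n)"

definition sturmian :: "(nat \<Rightarrow> nat) \<Rightarrow> bool" where
  "sturmian u \<longleftrightarrow> (\<forall>i. u i \<in> {0, 1}) \<and> (\<forall>n\<ge>1. card (blocks u n) = n + 1)"

definition shift :: "(nat \<Rightarrow> nat) \<Rightarrow> (nat \<Rightarrow> nat)" where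
  "shift x = (\<lambda>i. x (Suc i))"

definition Xplus :: "(nat \<Rightarrow> nat) \<Rightarrow> (nat \<Rightarrow> nat) set" where
  "Xplus u = closure (range (\<lambda>n. (shift ^^ n) u))"

definition Xtilde :: "(nat \<Rightarrow> nat) \<Rightarrow> (int \<Rightarrow> nat) set" where
  "Xtilde u = {x. \<forall>p::int. (\<lambda>i::nat. x (p + int i)) \<in> Xplus u}"

text \<open>The block a = a_{-n} ... a_0 is the list [a_{-n},...,a_0] of length n+1.\<close>
definition fol :: "(nat \<Rightarrow> nat) \<Rightarrow> nat list \<Rightarrow> (nat \<Rightarrow> nat) set" where
  "fol u a = {y \<in> Xplus u. \<exists>x \<in> Xtilde u. (\<forall>i::nat. x (int i) = y i) \<and>
      (\<forall>k<length a. x (int k - int (length a - 1)) = a ! k)}"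

definition significant :: "(nat \<Rightarrow> nat) \<Rightarrow> nat list \<Rightarrow> bool" where
  "significant u a \<longleftrightarrow> length a \<ge> 2 \<and> a \<in> lang u \<and> fol u a \<subset> fol u (tl a)"

definition left_special :: "(nat \<Rightarrow> nat) \<Rightarrow> nat \<Rightarrow> nat list" where
  "left_special u n = (THE w. length w = n \<and> 0 # w \<in> lang u \<and> 1 # w \<in> lang u)"

end

theory Submission
  imports Defs
begin

text \<open>A sequence with at most \<open>n\<close> blocks of some length \<open>n\<close> is eventually periodic
  (Morse--Hedlund), so a Sturmian sequence is not, and is therefore recurrent: every block
  extends on both sides, and comparing the \<open>n + 2\<close> blocks of length \<open>n + 1\<close> with the
  \<open>n + 1\<close> blocks of length \<open>n\<close> shows that exactly one block \<open>L\<^sub>n\<close> of each length is left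
  special. If \<open>w\<close> has a single left extension \<open>c\<close>, then \<open>c\<close> is forced in every past of \<open>w\<close>, so
  \<open>c w\<close> is not significant. If \<open>w\<close> is left special, some continuation \<open>w v\<close> cannot be
  preceded by \<open>c\<close>: otherwise all continuations of the other extension of \<open>w\<close> would be left
  special, hence unique, and the sequence would be eventually periodic. A two-sided point
  carrying \<open>w v\<close> with \<open>w\<close> ending at the origin then has a future that follows \<open>w\<close> but not \<open>c w\<close>.\<close>

lemma closure_discrete_fun_iff:
  fixes S :: "(nat \<Rightarrow> 'a::discrete_topology) set"
  shows "y \<in> closure S \<longleftrightarrow> (\<forall>k. \<exists>f\<in>S. \<forall>j<k. f j = y j)"
proof
  assume y: "y \<in> closure S"
  show "\<forall>k. \<exists>f\<in>S. \<forall>j<k. f j = y j"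
  proof
    fix k
    have o: "open {f::nat\<Rightarrow>'a. \<forall>i\<in>{..<k}. f (id i) \<in> {y i}}"
      by (rule product_topology_basis') (auto intro: open_discrete)
    have "y \<in> {f::nat\<Rightarrow>'a. \<forall>i\<in>{..<k}. f (id i) \<in> {y i}}" by simp
    then have "S \<inter> {f::nat\<Rightarrow>'a. \<forall>i\<in>{..<k}. f (id i) \<in> {y i}} \<noteq> {}"
      using y o unfolding closure_iff_nhds_not_empty by blast
    then show "\<exists>f\<in>S. \<forall>j<k. f j = y j" by auto
  qed
next
  assume agree: "\<forall>k. \<exists>f\<in>S. \<forall>j<k. f j = y j"
  show "y \<in> closure S"
    unfolding closure_iff_nhds_not_empty
  proof (intro allI impI)
    fix A T assume TA: "T \<subseteq> A" and oT: "open T" and yT: "y \<in> T"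
    from oT have "openin (product_topology (\<lambda>i. euclidean) UNIV) T" by (simp add: open_fun_def)
    then obtain U where U: "finite {i \<in> UNIV. U i \<noteq> topspace (euclidean::'a topology)}"
       "y \<in> Pi\<^sub>E UNIV U" "Pi\<^sub>E UNIV U \<subseteq> T"
      using yT unfolding openin_product_topology_alt by blast
    then obtain k where k: "{i. U i \<noteq> UNIV} \<subseteq> {..<k}"
      using finite_nat_bounded[OF U(1)[simplified]] by auto
    obtain f where f: "f \<in> S" "\<forall>j<k. f j = y j" using agree by blast
    have "f \<in> Pi\<^sub>E UNIV U"
    proof -
      have "f i \<in> U i" for i
      proof (cases "U i = UNIV")
        case False then have "i < k" using k by auto
        then show ?thesis using f U(2) by (auto simp: PiE_iff)
      qed auto
      then show ?thesis by (auto simp: PiE_iff)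
    qed
    then show "S \<inter> A \<noteq> {}" using f U(3) TA by blast
  qed
qed

definition occurs_at :: "(nat \<Rightarrow> nat) \<Rightarrow> nat list \<Rightarrow> nat \<Rightarrow> bool" where
  "occurs_at u w i \<longleftrightarrow> (\<forall>j<length w. u (i + j) = w ! j)"

lemma occurs_at_iff_segment:
  "occurs_at u w i \<longleftrightarrow> map (\<lambda>j. u (i + j)) [0..<length w] = w"
  unfolding occurs_at_def list_eq_iff_nth_eq by auto

lemma blocks_iff_occurs_at: "w \<in> blocks u n \<longleftrightarrow> length w = n \<and> (\<exists>i. occurs_at u w i)"
  unfolding blocks_def occurs_at_iff_segment by (auto dest: sym)

lemma lang_iff_occurs_at: "w \<in> lang u \<longleftrightarrow> (\<exists>i. occurs_at u w i)"
  unfolding lang_def using blocks_iff_occurs_at by blast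

lemma blocks_eq_lang_length: "blocks u n = {w \<in> lang u. length w = n}"
  by (auto simp: blocks_iff_occurs_at lang_iff_occurs_at)

lemma segment_in_lang: "map (\<lambda>j. u (i + j)) [0..<k] \<in> lang u"
  unfolding lang_iff_occurs_at occurs_at_iff_segment by auto

lemma lang_infix:
  assumes "xs @ ys @ zs \<in> lang u" shows "ys \<in> lang u"
proof -
  obtain i where "occurs_at u (xs @ ys @ zs) i" using assms lang_iff_occurs_at by blast
  then have "u (i + length xs + j) = ys ! j" if "j < length ys" for j
    using that unfolding occurs_at_def
    by (auto simp: add.assoc nth_append dest: spec[of _ "length xs + j"])
  then have "occurs_at u ys (i + length xs)"
    unfolding occurs_at_def by blast
  then show ?thesis using lang_iff_occurs_at by blast
qed

lemma lang_ConsD: "c # w \<in> lang u \<Longrightarrow> w \<in> lang u"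
  using lang_infix[of "[c]" w "[]"] by simp

lemma lang_snoc_extension:
  assumes "w \<in> lang u" obtains b where "w @ [b] \<in> lang u"
proof -
  obtain i where "occurs_at u w i" using assms lang_iff_occurs_at by blast
  then have "occurs_at u (w @ [u (i + length w)]) i"
    unfolding occurs_at_def by (simp add: nth_append less_Suc_eq)
  then show thesis using that lang_iff_occurs_at by blast
qed

lemma funpow_shift: "(shift ^^ n) u = (\<lambda>j. u (n + j))"
  by (induction n) (auto simp: shift_def)

lemma Xplus_iff_prefixes_in_lang: "y \<in> Xplus u \<longleftrightarrow> (\<forall>k. map y [0..<k] \<in> lang u)"
  unfolding Xplus_def closure_discrete_fun_iff funpow_shift lang_iff_occurs_at occurs_at_def
  by auto

definition window :: "(int \<Rightarrow> nat) \<Rightarrow> int \<Rightarrow> nat \<Rightarrow> nat list" where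
  "window x p k = map (\<lambda>j. x (p + int j)) [0..<k]"

lemma length_window [simp]: "length (window x p k) = k"
  by (simp add: window_def)

lemma window_add: "window x p (k + l) = window x p k @ window x (p + int k) l"
  unfolding window_def by (intro nth_equalityI) (auto simp: nth_append add.assoc)

lemma window_Suc: "window x p (Suc k) = x p # window x (p + 1) k"
  using window_add[of x p 1 k] by (simp add: window_def)

lemma Xtilde_iff_windows_in_lang: "x \<in> Xtilde u \<longleftrightarrow> (\<forall>p k. window x p k \<in> lang u)"
  unfolding Xtilde_def Xplus_iff_prefixes_in_lang window_def by auto

lemma finite_blocks: "finite (range u) \<Longrightarrow> finite (blocks u n)"
proof -
  assume "finite (range u)"
  moreover have "blocks u n \<subseteq> {w. set w \<subseteq> range u \<and> length w = n}"
    unfolding blocks_def by auto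
  ultimately show ?thesis
    using finite_lists_length_eq finite_subset by blast
qed

lemma blocks_0 [simp]: "blocks u 0 = {[]}"
  unfolding blocks_def by auto

lemma blocks_eq_take_image: "blocks u n = take n ` blocks u (Suc n)"
  unfolding blocks_def by (force simp: take_map simp del: upt_Suc)

lemma card_blocks_mono:
  "finite (range u) \<Longrightarrow> card (blocks u n) \<le> card (blocks u (Suc n))"
  using card_image_le[OF finite_blocks] blocks_eq_take_image by metis

definition eventually_periodic :: "(nat \<Rightarrow> 'a) \<Rightarrow> bool" where
  "eventually_periodic u \<longleftrightarrow> (\<exists>N P. P > 0 \<and> (\<forall>t\<ge>N. u (t + P) = u t))"

lemma eventually_periodicI:
  assumes "a < b" and shifted: "\<And>t. u (a + t) = u (b + t)"
  shows "eventually_periodic u"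
proof -
  have "u (t + (b - a)) = u t" if "t \<ge> a" for t
  proof -
    have "t + (b - a) = b + (t - a)" "a + (t - a) = t" using that \<open>a < b\<close> by auto
    then show ?thesis using shifted[of "t - a"] by simp
  qed
  then show ?thesis
    unfolding eventually_periodic_def using \<open>a < b\<close> zero_less_diff by blast
qed

lemma eventually_periodic_suffix:
  assumes "eventually_periodic (\<lambda>i. u (M + i))" shows "eventually_periodic u"
proof -
  obtain N P where "P > 0" and per: "\<forall>t\<ge>N. u (M + (t + P)) = u (M + t)"
    using assms unfolding eventually_periodic_def by blast
  have "u (t + P) = u t" if "t \<ge> M + N" for t
    using per[rule_format, of "t - M"] that by (simp add: add.commute)
  then show ?thesis
    unfolding eventually_periodic_def using \<open>P > 0\<close> by blast
qed

lemma eventually_periodic_low_complexity: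
  assumes "eventually_periodic u" obtains n where "card (blocks u n) \<le> n"
proof -
  obtain N P where P: "P > 0" and per: "\<forall>t\<ge>N. u (t + P) = u t"
    using assms unfolding eventually_periodic_def by blast
  let ?seg = "\<lambda>n i. map (\<lambda>j. u (i + j)) [0..<n]"
  have "\<exists>i'<N + P. ?seg n i = ?seg n i'" for n i
  proof (induction i rule: less_induct)
    case (less i)
    show ?case
    proof (cases "i < N + P")
      case False
      then have "u (i + j) = u (i - P + j)" for j
        using per[rule_format, of "i - P + j"] by auto
      then show ?thesis using less.IH[of "i - P"] P False by auto
    qed blast
  qed
  then have "blocks u (N + P) \<subseteq> ?seg (N + P) ` {..<N + P}"
    unfolding blocks_def by blast
  then have "card (blocks u (N + P)) \<le> N + P"
    by (metis card_image_le card_lessThan card_mono finite_imageI finite_lessThan order_trans)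
  then show thesis by (rule that)
qed

text \<open>Morse--Hedlund: a sequence whose complexity fails to increase at some length is
  eventually periodic, because then every block of that length has a unique right extension.\<close>
lemma eventually_periodic_if_card_blocks_stable:
  assumes fin: "finite (range u)" and stable: "card (blocks u (Suc n)) = card (blocks u n)"
  shows "eventually_periodic u"
proof -
  have inj: "inj_on (take n) (blocks u (Suc n))"
    using stable blocks_eq_take_image[of u n]
    by (intro eq_card_imp_inj_on[OF finite_blocks[OF fin]]) simp
  define W where "W i = map (\<lambda>j. u (i + j)) [0..<Suc n]" for i
  have W_blocks: "W i \<in> blocks u (Suc n)" for i
    unfolding W_def blocks_def by blast
  have "take n (W (Suc i)) = drop 1 (W i)" for i
    unfolding W_def by (intro nth_equalityI) (simp_all del: upt_Suc)
  then have W_step: "W (Suc a) = W (Suc b)" if "W a = W b" for a b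
    using inj_onD[OF inj _ W_blocks W_blocks] that by metis
  have "finite (range W)"
    using W_blocks finite_blocks[OF fin] by (meson finite_subset image_subsetI)
  then obtain a where "infinite {b. W b = W a}"
    using pigeonhole_infinite[of UNIV W] by auto
  then obtain b where "b > a" "W b = W a"
    unfolding infinite_nat_iff_unbounded by blast
  then have "W (a + t) = W (b + t)" for t
    by (induction t) (auto intro: W_step)
  moreover have "W i ! 0 = u i" for i
    unfolding W_def by (subst nth_map_upt) auto
  ultimately have "u (a + t) = u (b + t)" for t
    by metis
  then show ?thesis
    using eventually_periodicI[OF \<open>a < b\<close>] by blast
qed

lemma eventually_periodic_if_low_complexity:
  assumes fin: "finite (range u)" and low: "card (blocks u k) \<le> k"
  shows "eventually_periodic u"
proof (rule ccontr)
  assume "\<not> eventually_periodic u"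
  then have increasing: "card (blocks u n) < card (blocks u (Suc n))" for n
    using card_blocks_mono[OF fin, of n] eventually_periodic_if_card_blocks_stable[OF fin]
    by (metis le_neq_implies_less)
  have "card (blocks u n) \<ge> n + 1" for n
  proof (induction n)
    case (Suc n)
    then show ?case using increasing[of n] by linarith
  qed simp
  then show False using low by (metis Suc_eq_plus1 not_less_eq_eq)
qed

lemma segment_add:
  "map (\<lambda>j. u (i + j)) [0..<k + l] =
    map (\<lambda>j. u (i + j)) [0..<k] @ map (\<lambda>j. u (i + k + j)) [0..<l]"
  by (intro nth_equalityI) (auto simp: nth_append add.assoc)

lemma occurs_at_Cons: "occurs_at u (c # w) i \<longleftrightarrow> u i = c \<and> occurs_at u w (Suc i)"
  unfolding occurs_at_def by (auto simp: less_Suc_eq_0_disj)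

lemma occurs_at_suffix: "occurs_at (\<lambda>i. u (M + i)) w i \<longleftrightarrow> occurs_at u w (M + i)"
  unfolding occurs_at_def by (simp add: add.assoc)

lemma set_lang_subset_range: "w \<in> lang u \<Longrightarrow> set w \<subseteq> range u"
  unfolding lang_def blocks_def by auto

lemma sturmian_range: "sturmian u \<Longrightarrow> range u \<subseteq> {0, 1}"
  unfolding sturmian_def by (simp add: image_subset_iff)

lemma sturmian_finite_range: "sturmian u \<Longrightarrow> finite (range u)"
  using sturmian_range finite_subset by blast

lemma sturmian_lang_letters: "sturmian u \<Longrightarrow> w \<in> lang u \<Longrightarrow> set w \<subseteq> {0, 1}"
  by (rule subset_trans[OF set_lang_subset_range sturmian_range])

lemma card_blocks_sturmian: "sturmian u \<Longrightarrow> card (blocks u n) = n + 1"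
  unfolding sturmian_def by (cases "n = 0") auto

lemma sturmian_not_eventually_periodic:
  assumes "sturmian u" shows "\<not> eventually_periodic u"
proof
  assume "eventually_periodic u"
  then obtain n where "card (blocks u n) \<le> n" by (rule eventually_periodic_low_complexity)
  then show False using card_blocks_sturmian[OF assms, of n] by simp
qed

lemma sturmian_recurrent:
  assumes st: "sturmian u" and w: "w \<in> lang u"
  obtains i where "i \<ge> M" "occurs_at u w i"
proof (rule ccontr)
  assume "\<not> thesis"
  then have late: "\<not> occurs_at u w (M + i)" for i using that le_add1 by blast
  define v where "v = (\<lambda>i. u (M + i))"
  have "blocks v n \<subseteq> blocks u n" for n
  proof
    fix x assume "x \<in> blocks v n"
    then obtain i where "length x = n" "occurs_at v x i"
      unfolding blocks_iff_occurs_at by blast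
    then show "x \<in> blocks u n"
      unfolding blocks_iff_occurs_at v_def occurs_at_suffix by blast
  qed
  moreover have "w \<notin> blocks v (length w)" "w \<in> blocks u (length w)"
    using late w unfolding v_def blocks_iff_occurs_at occurs_at_suffix lang_iff_occurs_at by auto
  ultimately have "blocks v (length w) \<subset> blocks u (length w)" by blast
  then have "card (blocks v (length w)) < card (blocks u (length w))"
    by (rule psubset_card_mono[OF finite_blocks[OF sturmian_finite_range[OF st]]])
  then have "card (blocks v (length w)) \<le> length w"
    using card_blocks_sturmian[OF st] by simp
  moreover have "finite (range v)"
    by (rule finite_subset[OF _ sturmian_finite_range[OF st]]) (auto simp: v_def)
  ultimately have "eventually_periodic v"
    using eventually_periodic_if_low_complexity by blast
  then have "eventually_periodic u"
    unfolding v_def by (rule eventually_periodic_suffix)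
  then show False using sturmian_not_eventually_periodic[OF st] by blast
qed

lemma sturmian_left_extension:
  assumes "sturmian u" and "w \<in> lang u" obtains c where "c # w \<in> lang u"
proof -
  obtain i where "i \<ge> 1" "occurs_at u w i" using sturmian_recurrent assms by blast
  then have "occurs_at u (u (i - 1) # w) (i - 1)" by (simp add: occurs_at_Cons)
  then show thesis using that lang_iff_occurs_at by blast
qed

lemma sturmian_two_sided_extension:
  assumes "sturmian u" and "w \<in> lang u" shows "\<exists>a b. a # w @ [b] \<in> lang u"
proof -
  obtain b where "w @ [b] \<in> lang u" using assms(2) by (rule lang_snoc_extension)
  moreover obtain a where "a # w @ [b] \<in> lang u"
    using sturmian_left_extension[OF assms(1) calculation] by blast
  ultimately show ?thesis by blast
qed

definition left_special_word :: "(nat \<Rightarrow> nat) \<Rightarrow> nat list \<Rightarrow> bool" where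
  "left_special_word u w \<longleftrightarrow> 0 # w \<in> lang u \<and> 1 # w \<in> lang u"

definition blocks_preceded_by :: "(nat \<Rightarrow> nat) \<Rightarrow> nat \<Rightarrow> nat \<Rightarrow> nat list set" where
  "blocks_preceded_by u c m = {w. length w = m \<and> c # w \<in> lang u}"

lemma blocks_preceded_by_subset: "blocks_preceded_by u c m \<subseteq> blocks u m"
  unfolding blocks_preceded_by_def blocks_eq_lang_length using lang_ConsD by blast

lemma blocks_Suc_sturmian:
  assumes st: "sturmian u"
  shows "blocks u (Suc m) = Cons 0 ` blocks_preceded_by u 0 m \<union> Cons 1 ` blocks_preceded_by u 1 m"
proof (intro equalityI subsetI)
  fix x assume "x \<in> blocks u (Suc m)"
  then have x: "length x = Suc m" "x \<in> lang u"
    unfolding blocks_eq_lang_length by simp_all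
  then obtain c w where cw: "x = c # w" by (cases x) auto
  then have "c \<in> {0, 1}" using sturmian_lang_letters[OF st x(2)] by simp
  then show "x \<in> Cons 0 ` blocks_preceded_by u 0 m \<union> Cons 1 ` blocks_preceded_by u 1 m"
    using x cw unfolding blocks_preceded_by_def by auto
qed (auto simp: blocks_preceded_by_def blocks_eq_lang_length)

lemma blocks_sturmian_preceded:
  assumes st: "sturmian u"
  shows "blocks u m = blocks_preceded_by u 0 m \<union> blocks_preceded_by u 1 m"
proof (intro equalityI subsetI)
  fix w assume "w \<in> blocks u m"
  then have w: "length w = m" "w \<in> lang u"
    unfolding blocks_eq_lang_length by simp_all
  then obtain c where "c # w \<in> lang u" using sturmian_left_extension[OF st] by blast
  moreover have "c \<in> {0, 1}" using sturmian_lang_letters[OF st calculation] by simp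
  ultimately show "w \<in> blocks_preceded_by u 0 m \<union> blocks_preceded_by u 1 m"
    using w(1) unfolding blocks_preceded_by_def by auto
qed (use blocks_preceded_by_subset in blast)

text \<open>Counting blocks of length \<open>m + 1\<close> by their first letter counts the blocks of length \<open>m\<close>
  once, and the left special ones twice.\<close>
lemma card_left_special_words:
  assumes st: "sturmian u"
  shows "card {w. length w = m \<and> left_special_word u w} = 1"
proof -
  let ?A = "blocks_preceded_by u"
  have fin: "finite (?A c m)" for c
    by (rule finite_subset[OF blocks_preceded_by_subset finite_blocks[OF sturmian_finite_range[OF st]]])
  have "card (blocks u (Suc m)) = card (Cons 0 ` ?A 0 m) + card (Cons 1 ` ?A 1 m)"
    unfolding blocks_Suc_sturmian[OF st] by (rule card_Un_disjoint) (use fin in auto)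
  also have "\<dots> = card (?A 0 m) + card (?A 1 m)"
    by (simp add: card_image)
  also have "\<dots> = card (?A 0 m \<union> ?A 1 m) + card (?A 0 m \<inter> ?A 1 m)"
    by (rule card_Un_Int[OF fin fin])
  finally have "card (blocks u (Suc m)) = card (?A 0 m \<union> ?A 1 m) + card (?A 0 m \<inter> ?A 1 m)" .
  moreover have "?A 0 m \<inter> ?A 1 m = {w. length w = m \<and> left_special_word u w}"
    unfolding blocks_preceded_by_def left_special_word_def by blast
  ultimately have "card (blocks u (Suc m)) =
      card (blocks u m) + card {w. length w = m \<and> left_special_word u w}"
    unfolding blocks_sturmian_preceded[OF st, of m] by (simp only:)
  then show ?thesis
    using card_blocks_sturmian[OF st, of m] card_blocks_sturmian[OF st, of "Suc m"] by simp
qed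

lemma left_special_word_unique:
  assumes "sturmian u" and "left_special_word u w" and "left_special_word u w'"
    and "length w = length w'"
  shows "w = w'"
proof -
  obtain z where z: "{v. length v = length w \<and> left_special_word u v} = {z}"
    using card_left_special_words[OF assms(1)] by (rule card_1_singletonE)
  have "w \<in> {v. length v = length w \<and> left_special_word u v}"
    using assms(2) by simp
  moreover have "w' \<in> {v. length v = length w \<and> left_special_word u v}"
    using assms(3,4) by simp
  ultimately show ?thesis unfolding z by simp
qed

lemma left_special_spec:
  assumes st: "sturmian u"
  shows "length (left_special u m) = m \<and> left_special_word u (left_special u m)"
proof -
  obtain z where "{w. length w = m \<and> left_special_word u w} = {z}"
    using card_left_special_words[OF st] by (rule card_1_singletonE)
  then have "length z = m \<and> left_special_word u z"
    by (metis (mono_tags) mem_Collect_eq singletonI)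
  then have "\<exists>!w. length w = m \<and> left_special_word u w"
    using left_special_word_unique[OF st] by metis
  then show ?thesis
    unfolding left_special_def left_special_word_def by (rule theI')
qed

lemma left_special_separating_continuation:
  assumes st: "sturmian u" and c: "c \<in> {0, 1}" and ls: "left_special_word u w"
  shows "\<exists>v. w @ v \<in> lang u \<and> c # w @ v \<notin> lang u"
proof (rule ccontr)
  assume "\<not> ?thesis"
  then have follow: "c # w @ v \<in> lang u" if "w @ v \<in> lang u" for v
    using that by blast
  define d where "d = 1 - c"
  have ls_continuation: "left_special_word u (w @ v)" if "d # w @ v \<in> lang u" for v
    using follow[OF lang_ConsD[OF that]] that c unfolding left_special_word_def d_def by auto
  have "d # w \<in> lang u" using ls c unfolding left_special_word_def d_def by auto
  moreover obtain i where i: "occurs_at u (d # w) i"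
    using calculation lang_iff_occurs_at by blast
  ultimately obtain i' where i': "i' > i" "occurs_at u (d # w) i'"
    using sturmian_recurrent[OF st, of "d # w" "Suc i"] by (metis Suc_le_eq)
  let ?K = "length (d # w)"
  let ?v = "\<lambda>j t. map (\<lambda>s. u (j + ?K + s)) [0..<t]"
  have continuation_in_lang: "d # w @ ?v j t \<in> lang u" if "occurs_at u (d # w) j" for j t
  proof -
    have "map (\<lambda>s. u (j + s)) [0..<?K + t] = (d # w) @ ?v j t"
      unfolding segment_add using that[unfolded occurs_at_iff_segment] by (simp only:)
    then show ?thesis using segment_in_lang by (metis append_Cons)
  qed
  have same_continuation: "?v i t = ?v i' t" for t
  proof -
    have "w @ ?v i t = w @ ?v i' t"
      by (rule left_special_word_unique[OF st ls_continuation ls_continuation])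
        (use continuation_in_lang i i'(2) in simp_all)
    then show ?thesis by simp
  qed
  have shifted: "u (i + ?K + t) = u (i' + ?K + t)" for t
    using arg_cong[OF same_continuation[of "Suc t"], of "\<lambda>l. l ! t"] by (simp del: upt_Suc)
  have "eventually_periodic u"
    by (rule eventually_periodicI[of "i + ?K" "i' + ?K", OF _ shifted]) (use i'(1) in simp)
  then show False using sturmian_not_eventually_periodic[OF st] by blast
qed

lemma length_nested_words:
  assumes "\<And>k. \<exists>a b. W (Suc k) = a # W k @ [b]"
  shows "length (W k) = length (W 0) + 2 * k"
proof (induction k)
  case (Suc k)
  obtain a b where "W (Suc k) = a # W k @ [b]" using assms by blast
  then show ?case using Suc.IH by simp
qed simp

lemma nth_nested_words:
  assumes nested: "\<And>k. \<exists>a b. W (Suc k) = a # W k @ [b]" and "j < length (W k)"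
  shows "W (k + r) ! (j + r) = W k ! j"
proof (induction r)
  case (Suc r)
  obtain a b where "W (Suc (k + r)) = a # W (k + r) @ [b]" using nested by blast
  moreover have "j + r < length (W (k + r))"
    using assms(2) length_nested_words[of W, OF nested, of k] length_nested_words[of W, OF nested, of "k + r"]
    by simp
  ultimately show ?case using Suc.IH by (simp add: nth_append)
qed simp

text \<open>The two-sided limit of words \<open>W k\<close> growing by one letter on each side, with \<open>W k\<close>
  placed at \<open>p - k\<close>: position \<open>t\<close> is read off the first \<open>W k\<close> that covers it.\<close>
definition nested_limit :: "(nat \<Rightarrow> nat list) \<Rightarrow> int \<Rightarrow> int \<Rightarrow> nat" where
  "nested_limit W p t = W (nat \<bar>t - p\<bar> + 1) ! nat (t - p + int (nat \<bar>t - p\<bar> + 1))"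

lemma nested_limit_eq:
  assumes nested: "\<And>k. \<exists>a b. W (Suc k) = a # W k @ [b]" and "K > nat \<bar>t - p\<bar>"
  shows "nested_limit W p t = W K ! nat (t - p + int K)"
proof -
  let ?k = "nat \<bar>t - p\<bar> + 1" and ?i = "nat (t - p + int (nat \<bar>t - p\<bar> + 1))"
  have "?i < length (W ?k)"
    unfolding length_nested_words[of W, OF nested, of ?k] by (subst nat_less_iff) auto
  then have "W ?k ! ?i = W (?k + (K - ?k)) ! (?i + (K - ?k))"
    by (rule nth_nested_words[of W, OF nested, symmetric])
  moreover have "?k + (K - ?k) = K" "?i + (K - ?k) = nat (t - p + int K)"
    using assms(2) by arith+
  ultimately show ?thesis unfolding nested_limit_def by simp
qed

lemma window_nested_limit:
  assumes nested: "\<And>k. \<exists>a b. W (Suc k) = a # W k @ [b]"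
  shows "window (nested_limit W p) (p - int k) (length (W k)) = W k"
proof (rule nth_equalityI)
  fix j assume "j < length (window (nested_limit W p) (p - int k) (length (W k)))"
  then have j: "j < length (W k)" by simp
  have bound: "nat \<bar>p - int k + int j - p\<bar> < k + (j + 1)"
    and index: "nat (p - int k + int j - p + int (k + (j + 1))) = j + (j + 1)"
    by arith+
  have "nested_limit W p (p - int k + int j) = W (k + (j + 1)) ! (j + (j + 1))"
    using nested_limit_eq[of W, OF nested bound] unfolding index .
  also have "\<dots> = W k ! j"
    by (rule nth_nested_words[of W, OF nested j])
  finally show "window (nested_limit W p) (p - int k) (length (W k)) ! j = W k ! j"
    using j by (simp add: window_def)
qed simp

text \<open>Every window of the limit lies inside a window carrying some \<open>W K\<close>.\<close>
lemma nested_limit_in_Xtilde: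
  assumes lang: "\<And>k. W k \<in> lang u" and nested: "\<And>k. \<exists>a b. W (Suc k) = a # W k @ [b]"
  shows "nested_limit W p \<in> Xtilde u"
  unfolding Xtilde_iff_windows_in_lang
proof (intro allI)
  fix q l
  let ?x = "nested_limit W p"
  define K where "K = nat \<bar>q - p\<bar> + l"
  define s where "s = nat (q - (p - int K))"
  define r where "r = length (W K) - (s + l)"
  have "s + l \<le> length (W K) \<and> p - int K + int s = q"
    using length_nested_words[of W, OF nested, of K] K_def s_def by arith
  then have "length (W K) = s + l + r" and start: "p - int K + int s = q"
    unfolding r_def by auto
  then have "W K = window ?x (p - int K) s @ window ?x q l @ window ?x (q + int l) r"
    using window_nested_limit[of W, OF nested, of p K] window_add[of ?x "p - int K" s "l + r"]
      window_add[of ?x q l r]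
    by (simp add: add.assoc)
  then show "window ?x q l \<in> lang u"
    using lang[of K] lang_infix[of "window ?x (p - int K) s" "window ?x q l"] by simp
qed

lemma extends_to_Xtilde:
  assumes ext: "\<And>z. z \<in> lang u \<Longrightarrow> \<exists>a b. a # z @ [b] \<in> lang u" and w: "w \<in> lang u"
  obtains x where "x \<in> Xtilde u" and "window x p (length w) = w"
proof -
  define E where "E z = (SOME y. y \<in> lang u \<and> (\<exists>a b. y = a # z @ [b]))" for z
  have E: "E z \<in> lang u \<and> (\<exists>a b. E z = a # z @ [b])" if "z \<in> lang u" for z
  proof -
    have "\<exists>y. y \<in> lang u \<and> (\<exists>a b. y = a # z @ [b])" using ext[OF that] by blast
    then show ?thesis unfolding E_def by (rule someI_ex)
  qed
  define W where "W k = (E ^^ k) w" for k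
  have W_Suc: "W (Suc k) = E (W k)" for k
    by (simp add: W_def)
  have W_lang: "W k \<in> lang u" for k
  proof (induction k)
    case 0 then show ?case by (simp add: W_def w)
  next
    case (Suc k) then show ?case using E W_Suc by metis
  qed
  have nested: "\<exists>a b. W (Suc k) = a # W k @ [b]" for k
    using E[OF W_lang] W_Suc by metis
  show thesis
    using that[OF nested_limit_in_Xtilde[of W, OF W_lang nested]] window_nested_limit[of W, OF nested, of p 0]
    by (simp add: W_def)
qed

lemma fol_iff_window:
  "y \<in> fol u a \<longleftrightarrow> y \<in> Xplus u \<and>
     (\<exists>x\<in>Xtilde u. (\<forall>i. x (int i) = y i) \<and> window x (1 - int (length a)) (length a) = a)"
proof -
  have index: "int k - int (length a - 1) = 1 - int (length a) + int k" if "k < length a" for k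
    using that by simp
  have "window x (1 - int (length a)) (length a) = a \<longleftrightarrow>
        (\<forall>k<length a. x (1 - int (length a) + int k) = a ! k)" for x :: "int \<Rightarrow> nat"
    unfolding window_def list_eq_iff_nth_eq by simp
  also have "\<dots> x \<longleftrightarrow> (\<forall>k<length a. x (int k - int (length a - 1)) = a ! k)" for x :: "int \<Rightarrow> nat"
    using index by metis
  finally have eqv: "window x (1 - int (length a)) (length a) = a \<longleftrightarrow>
        (\<forall>k<length a. x (int k - int (length a - 1)) = a ! k)" for x .
  show ?thesis unfolding fol_def mem_Collect_eq eqv by (rule refl)
qed

lemma fol_Cons_subset: "fol u (c # w) \<subseteq> fol u w"
proof
  fix y assume "y \<in> fol u (c # w)"
  then obtain x where "y \<in> Xplus u" "x \<in> Xtilde u" "\<forall>i. x (int i) = y i"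
    and "window x (- int (length w)) (Suc (length w)) = c # w"
    unfolding fol_iff_window by auto
  moreover have "- int (length w) + 1 = 1 - int (length w)" by simp
  ultimately show "y \<in> fol u w"
    unfolding fol_iff_window window_Suc by auto
qed

lemma fol_subset_Cons_if_unique_left_letter:
  assumes unique: "\<And>d. d # w \<in> lang u \<Longrightarrow> d = c"
  shows "fol u w \<subseteq> fol u (c # w)"
proof
  fix y assume "y \<in> fol u w"
  then obtain x where x: "y \<in> Xplus u" "x \<in> Xtilde u" "\<forall>i. x (int i) = y i"
    and w: "window x (1 - int (length w)) (length w) = w"
    unfolding fol_iff_window by blast
  have "window x (- int (length w)) (Suc (length w)) = x (- int (length w)) # w"
    using w by (simp add: window_Suc)
  moreover have "window x (- int (length w)) (Suc (length w)) \<in> lang u"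
    using x(2) unfolding Xtilde_iff_windows_in_lang by blast
  ultimately have "window x (- int (length w)) (Suc (length w)) = c # w"
    using unique by simp
  then show "y \<in> fol u (c # w)"
    unfolding fol_iff_window using x by auto
qed

lemma fol_Cons_neq_if_separating_continuation:
  assumes ext: "\<And>z. z \<in> lang u \<Longrightarrow> \<exists>a b. a # z @ [b] \<in> lang u"
    and v: "w @ v \<in> lang u" "c # w @ v \<notin> lang u"
  shows "fol u (c # w) \<noteq> fol u w"
proof
  obtain x where x: "x \<in> Xtilde u" and wv: "window x (1 - int (length w)) (length (w @ v)) = w @ v"
    using extends_to_Xtilde[OF ext v(1)] by blast
  then have w: "window x (1 - int (length w)) (length w) = w"
    and v_at_1: "window x 1 (length v) = v"
    using window_add[of x "1 - int (length w)" "length w" "length v"] by simp_all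
  define y where "y = (\<lambda>i. x (int i))"
  have "(\<lambda>i. x (0 + int i)) \<in> Xplus u"
    using x unfolding Xtilde_def by blast
  then have "y \<in> Xplus u"
    by (simp add: y_def)
  then have "y \<in> fol u w"
    unfolding fol_iff_window using x w y_def by blast
  moreover assume "fol u (c # w) = fol u w"
  ultimately have "y \<in> fol u (c # w)" by simp
  then obtain x' where x': "x' \<in> Xtilde u" "\<forall>i. x' (int i) = y i"
    and cw: "window x' (- int (length w)) (Suc (length w)) = c # w"
    unfolding fol_iff_window by auto
  have "x' (1 + int j) = x (1 + int j)" for j
    using x'(2)[rule_format, of "Suc j"] by (simp add: y_def)
  then have "window x' 1 (length v) = window x 1 (length v)"
    by (simp add: window_def)
  then have "window x' (- int (length w)) (Suc (length w) + length v) = c # w @ v"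
    using cw v_at_1 window_add[of x' "- int (length w)" "Suc (length w)" "length v"] by simp
  moreover have "window x' (- int (length w)) (Suc (length w) + length v) \<in> lang u"
    using x'(1) unfolding Xtilde_iff_windows_in_lang by blast
  ultimately show False using v(2) by simp
qed

lemma significant_Cons_iff:
  assumes st: "sturmian u"
  shows "significant u (c # w) \<longleftrightarrow> w \<noteq> [] \<and> c \<in> {0, 1} \<and> left_special_word u w"
proof
  assume "significant u (c # w)"
  then have "w \<noteq> []" and cw: "c # w \<in> lang u" and strict: "fol u (c # w) \<subset> fol u w"
    unfolding significant_def by auto
  moreover have c: "c \<in> {0, 1}" using sturmian_lang_letters[OF st cw] by simp
  moreover have "left_special_word u w"
  proof (rule ccontr)
    assume "\<not> left_special_word u w"
    then have "d = c" if "d # w \<in> lang u" for d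
      using that cw c sturmian_lang_letters[OF st that] unfolding left_special_word_def by auto
    then have "fol u w \<subseteq> fol u (c # w)" by (rule fol_subset_Cons_if_unique_left_letter)
    then show False using strict by blast
  qed
  ultimately show "w \<noteq> [] \<and> c \<in> {0, 1} \<and> left_special_word u w" by blast
next
  assume "w \<noteq> [] \<and> c \<in> {0, 1} \<and> left_special_word u w"
  then have w: "w \<noteq> []" and c: "c \<in> {0, 1}" and ls: "left_special_word u w" by auto
  then have "c # w \<in> lang u" unfolding left_special_word_def by auto
  moreover obtain v where "w @ v \<in> lang u" "c # w @ v \<notin> lang u"
    using left_special_separating_continuation[OF st c ls] by blast
  then have "fol u (c # w) \<noteq> fol u w"
    using fol_Cons_neq_if_separating_continuation sturmian_two_sided_extension[OF st] by blast
  moreover have "length (c # w) \<ge> 2" using w by (cases w) auto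
  ultimately show "significant u (c # w)"
    unfolding significant_def using fol_Cons_subset by auto
qed

theorem proposition4p7:
  fixes u :: "nat \<Rightarrow> nat" and n :: nat
  assumes "sturmian u" and "n \<ge> 2"
  shows "{a. length a = n \<and> significant u a}
           = {0 # left_special u (n - 1), 1 # left_special u (n - 1)}"
proof -
  let ?L = "left_special u (n - 1)"
  have L: "length ?L = n - 1" "left_special_word u ?L"
    using left_special_spec[OF assms(1)] by blast+
  have is_L: "w = ?L \<longleftrightarrow> length w = n - 1 \<and> left_special_word u w" for w
    using left_special_word_unique[OF assms(1) _ L(2), of w] L by auto
  have "length a = n \<and> significant u a \<longleftrightarrow> a \<in> {0 # ?L, 1 # ?L}" for a
  proof (cases a)
    case (Cons c w)
    have "significant u a \<longleftrightarrow> w \<noteq> [] \<and> c \<in> {0, 1} \<and> left_special_word u w"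
      unfolding Cons by (rule significant_Cons_iff[OF assms(1)])
    moreover have "a \<in> {0 # ?L, 1 # ?L} \<longleftrightarrow> c \<in> {0, 1} \<and> w = ?L"
      unfolding Cons by blast
    ultimately show ?thesis
      unfolding is_L using Cons assms(2) by auto
  qed (use assms(2) in simp)
  then show ?thesis by blast
qed

end
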